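(* Let $\diamond$ and $\circ$ be associative binary operations on a set $A$ such that $(A,\diamond)$ is a left cancellative semigroup. Consider the statements: (1) There exists a function $\sigma:A\to A$ such that for all $a,b,c\in A$, $\sigma(a)\le a\circ c$ and $a\circ(b\diamond c)=(a\circ b)\diamond\underline{\sigma(a)^\diamond\diamond(a\circ c)}$. (2) There exists a function $\lambda:A\times A\to A$ such that $(A,\diamond,\circ,\lambda)$ is a left semi-truss. (3) For all $a,b,c,d\in A$ with $c\le d$, one has $a\circ c\le a\circ d$ and $a\circ\big(b\diamond\underline{c^\diamond\diamond d}\big)=(a\circ b)\diamond\underline{(a\circ c)^\diamond\diamond(a\circ d)}$. Then (1) implies (2) and (2) implies (3). If moreover $(A,\diamond)$ has an idempotent, then (1), (2), (3) are all equivalent.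
   Context: A left semi-truss $(A,\diamond,\circ,\lambda)$ is a set $A$ with two associative binary operations $\diamond,\circ$ and a function $\lambda:A\times A\to A$ such that $a\circ(b\diamond c)=(a\circ b)\diamond\lambda(a,c)$ for all $a,b,c\in A$. A semigroup $(A,\diamond)$ is left cancellative if $a\diamond b=a\diamond c$ implies $b=c$. On a left cancellative semigroup define the preorder $a\le b$ iff there exists $c\in A$ with $a\diamond c=b$; by left cancellation such $c$ is unique and is denoted $\underline{a^\diamond\diamond b}$ (a single element, characterised by $a\diamond\underline{a^\diamond\diamond b}=b$). *)

theory Defs
  imports Main
begin

definition associative :: "('a \<Rightarrow> 'a \<Rightarrow> 'a) \<Rightarrow> bool" where
  "associative f \<longleftrightarrow> (\<forall>a b c. f (f a b) c = f a (f b c))"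

definition left_cancellative :: "('a \<Rightarrow> 'a \<Rightarrow> 'a) \<Rightarrow> bool" where
  "left_cancellative f \<longleftrightarrow> (\<forall>a b c. f a b = f a c \<longrightarrow> b = c)"

definition sle :: "('a \<Rightarrow> 'a \<Rightarrow> 'a) \<Rightarrow> 'a \<Rightarrow> 'a \<Rightarrow> bool" where
  "sle f a b \<longleftrightarrow> (\<exists>c. f a c = b)"

text \<open>The unique c with a \<diamond> c = b (meaningful when a \<le> b in a left cancellative semigroup).\<close>
definition ldiv :: "('a \<Rightarrow> 'a \<Rightarrow> 'a) \<Rightarrow> 'a \<Rightarrow> 'a \<Rightarrow> 'a" where
  "ldiv f a b = (THE c. f a c = b)"

definition left_semi_truss ::
  "('a \<Rightarrow> 'a \<Rightarrow> 'a) \<Rightarrow> ('a \<Rightarrow> 'a \<Rightarrow> 'a) \<Rightarrow> ('a \<Rightarrow> 'a \<Rightarrow> 'a) \<Rightarrow> bool" where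
  "left_semi_truss d c lam \<longleftrightarrow> associative d \<and> associative c \<and>
     (\<forall>a b e. c a (d b e) = d (c a b) (lam a e))"

end

theory Submission
  imports Defs
begin

text \<open>
  A semi-truss structure map \<open>\<lambda>\<close> is forced on quotients: from \<open>a \<circ> (c \<diamond> x) = (a \<circ> c) \<diamond> \<lambda>(a,x)\<close>
  and left cancellation, \<open>\<lambda>(a,x)\<close> is the quotient of \<open>a \<circ> (c \<diamond> x)\<close> by \<open>a \<circ> c\<close>, which gives (3).
  Conversely, (1) yields \<open>\<lambda>(a,c) = \<sigma>(a)\<^sup>\<diamond> \<diamond> (a \<circ> c)\<close>. An idempotent \<open>e\<close> of a left
  cancellative semigroup is a left identity, so \<open>e \<le> c\<close> with quotient \<open>c\<close> for every \<open>c\<close>, and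
  (3) applied to \<open>e \<le> c\<close> gives (1) with \<open>\<sigma>(a) = a \<circ> e\<close>.
\<close>

lemma ldiv_unique:
  assumes "left_cancellative f" "f a x = b"
  shows "ldiv f a b = x"
  unfolding ldiv_def using assms by (auto simp: left_cancellative_def)

lemma idempotent_left_neutral:
  assumes "associative f" "left_cancellative f" "f e e = e"
  shows "f e c = c"
proof -
  have "f e (f e c) = f e c"
    using assms(1,3) unfolding associative_def by metis
  then show ?thesis
    using assms(2) unfolding left_cancellative_def by blast
qed

lemma left_semi_truss_ldiv:
  assumes "left_semi_truss d c lam" "left_cancellative d" "d x y = z"
  shows "sle d (c a x) (c a z) \<and> ldiv d (c a x) (c a z) = lam a y"
proof -
  have "d (c a x) (lam a y) = c a z"
    using assms(1,3) unfolding left_semi_truss_def by metis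
  then show ?thesis
    using ldiv_unique[OF assms(2)] unfolding sle_def by blast
qed

lemma left_semi_truss_of_shift:
  assumes "associative d" "associative c"
    and "\<And>a b x. c a (d b x) = d (c a b) (ldiv d (\<sigma> a) (c a x))"
  shows "left_semi_truss d c (\<lambda>a x. ldiv d (\<sigma> a) (c a x))"
  unfolding left_semi_truss_def using assms by blast

lemma left_semi_truss_quotient_law:
  assumes "left_semi_truss d c lam" "left_cancellative d" "sle d x z"
  shows "sle d (c a x) (c a z) \<and>
         c a (d b (ldiv d x z)) = d (c a b) (ldiv d (c a x) (c a z))"
proof -
  obtain y where y: "d x y = z"
    using assms(3) unfolding sle_def by blast
  have "ldiv d x z = y"
    using ldiv_unique[OF assms(2) y] .
  moreover have "c a (d b y) = d (c a b) (lam a y)"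
    using assms(1) unfolding left_semi_truss_def by blast
  ultimately show ?thesis
    using left_semi_truss_ldiv[OF assms(1,2) y] by simp
qed

lemma shift_of_quotient_law:
  assumes "associative d" "left_cancellative d" "d e e = e"
    and "\<And>x z. sle d x z \<Longrightarrow>
           sle d (c a x) (c a z) \<and> c a (d b (ldiv d x z)) = d (c a b) (ldiv d (c a x) (c a z))"
  shows "sle d (c a e) (c a x) \<and> c a (d b x) = d (c a b) (ldiv d (c a e) (c a x))"
proof -
  have ex: "d e x = x"
    using idempotent_left_neutral[OF assms(1-3)] .
  then have "sle d e x" "ldiv d e x = x"
    using ldiv_unique[OF assms(2)] unfolding sle_def by blast+
  then show ?thesis
    using assms(4) by metis
qed

theorem proposition2p2:
  fixes dia :: "'a \<Rightarrow> 'a \<Rightarrow> 'a" and circ :: "'a \<Rightarrow> 'a \<Rightarrow> 'a"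
  assumes "associative dia" and "associative circ" and "left_cancellative dia"
  defines "S1 \<equiv> (\<exists>\<sigma> :: 'a \<Rightarrow> 'a. \<forall>a b c.
              sle dia (\<sigma> a) (circ a c) \<and>
              circ a (dia b c) = dia (circ a b) (ldiv dia (\<sigma> a) (circ a c)))"
      and "S2 \<equiv> (\<exists>lam :: 'a \<Rightarrow> 'a \<Rightarrow> 'a. left_semi_truss dia circ lam)"
      and "S3 \<equiv> (\<forall>a b c d. sle dia c d \<longrightarrow>
              sle dia (circ a c) (circ a d) \<and>
              circ a (dia b (ldiv dia c d)) = dia (circ a b) (ldiv dia (circ a c) (circ a d)))"
  shows "(S1 \<longrightarrow> S2) \<and> (S2 \<longrightarrow> S3) \<and>
         ((\<exists>e. dia e e = e) \<longrightarrow> (S1 \<longleftrightarrow> S2) \<and> (S2 \<longleftrightarrow> S3))"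
proof -
  have S12: "S1 \<longrightarrow> S2"
    unfolding S1_def S2_def using left_semi_truss_of_shift[OF assms(1,2)] by metis
  have S23: "S2 \<longrightarrow> S3"
    unfolding S2_def S3_def using left_semi_truss_quotient_law[OF _ assms(3)] by blast
  have S31: "S3 \<longrightarrow> S1" if "dia e e = e" for e
  proof
    assume S3
    then have "sle dia (circ a e) (circ a x) \<and>
                 circ a (dia b x) = dia (circ a b) (ldiv dia (circ a e) (circ a x))" for a b x
      using shift_of_quotient_law[OF assms(1,3) that, of circ] \<open>S3\<close> unfolding S3_def by blast
    then show S1
      unfolding S1_def by (intro exI[of _ "\<lambda>a. circ a e"]) simp
  qed
  show ?thesis
    using S12 S23 S31 by blast
qed

end
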